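(* Let $S_1,S_2$ be numerical semigroups and $a_1,a_2$ coprime positive integers with $a_2\in S_1$ and $a_1\in S_2$, and let $S=a_1S_1+a_2S_2$. Then $S_1\le_P S$ and $S_2\le_P S$, in each case with a relating polynomial having nonnegative integer coefficients; i.e. for $i=1,2$ there exist an integer $w_i\ge1$ and $f_i\in\mathbb N[x]$ with $\mathrm H_{S_i}(x^{w_i})f_i(x)=\mathrm H_S(x)$.
   Context: A numerical semigroup is a submonoid of $(\mathbb N,+)$ with finite complement in $\mathbb N$; $aA=\{ax:x\in A\}$, $A+B=\{x+y:x\in A,y\in B\}$. $\mathrm H_S(x)=\sum_{s\in S}x^s$. Numerical semigroups $S,T$ are polynomially related, $S\le_P T$, if there exist $f\in\mathbb Z[x]$ and an integer $w\ge1$ with $\mathrm H_S(x^w)f(x)=\mathrm H_T(x)$. $\mathbb N[x]$ denotes polynomials with nonnegative integer coefficients. (In the paper, $S$ is called the gluing $a_1S_1+_{a_1a_2}a_2S_2$.) *)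

theory Defs
  imports "HOL-Computational_Algebra.Polynomial_FPS"
begin

definition numerical_semigroup :: "nat set \<Rightarrow> bool" where
  "numerical_semigroup S \<longleftrightarrow> 0 \<in> S \<and> (\<forall>x\<in>S. \<forall>y\<in>S. x + y \<in> S) \<and> finite (UNIV - S)"

definition hilbert_series :: "nat set \<Rightarrow> int fps" where
  "hilbert_series S = Abs_fps (\<lambda>n. if n \<in> S then 1 else 0)"

definition lin_comb_set :: "nat \<Rightarrow> nat set \<Rightarrow> nat \<Rightarrow> nat set \<Rightarrow> nat set" where
  "lin_comb_set a A b B = {a * x + b * y | x y. x \<in> A \<and> y \<in> B}"

definition poly_related :: "nat set \<Rightarrow> nat set \<Rightarrow> bool" where
  "poly_related S T \<longleftrightarrow> (\<exists>(f::int poly) (w::nat). w \<ge> 1 \<and>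
     (hilbert_series S oo fps_X ^ w) * fps_of_poly f = hilbert_series T)"

end

theory Submission
  imports Defs "HOL-Number_Theory.Cong"
begin

text \<open>Let \<open>Ap\<close> be the Apery set of \<open>S2\<close> with respect to \<open>a1\<close>, so every element of \<open>S2\<close> is
  \<open>w + k * a1\<close> with \<open>w \<in> Ap\<close>. Since \<open>a2 \<in> S1\<close>, the part \<open>k * a1 * a2\<close> of \<open>a2 * (w + k * a1)\<close>
  can be absorbed into \<open>a1 * S1\<close>; since \<open>coprime a1 a2\<close>, the Apery component \<open>w\<close> of
  \<open>a1 * u + a2 * w\<close> is determined by its residue modulo \<open>a1\<close>. Hence \<open>S\<close> is the disjoint union of
  the translates \<open>a2 * w + a1 * S1\<close> for \<open>w \<in> Ap\<close>, which is the identity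
  \<open>H_S(x) = H_S1(x^a1) * (\<Sum>w\<in>Ap. x^(a2 * w))\<close>. The case of \<open>S2\<close> is symmetric.\<close>

lemma numerical_semigroup_add_closed:
  "numerical_semigroup S \<Longrightarrow> x \<in> S \<Longrightarrow> y \<in> S \<Longrightarrow> x + y \<in> S"
  by (simp add: numerical_semigroup_def)

lemma numerical_semigroup_mult_closed:
  assumes "numerical_semigroup S" "a \<in> S"
  shows "k * a \<in> S"
  using assms by (induction k) (auto simp: numerical_semigroup_def)

text \<open>The Apery set \<open>Ap(S, a) = {s \<in> S. s - a \<notin> S}\<close>; the guard \<open>a \<le> s\<close> avoids truncated
  subtraction.\<close>
definition apery_set :: "nat set \<Rightarrow> nat \<Rightarrow> nat set" where
  "apery_set S a = {s \<in> S. \<not> (a \<le> s \<and> s - a \<in> S)}"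

lemma apery_set_subset: "apery_set S a \<subseteq> S"
  by (auto simp: apery_set_def)

lemma finite_apery_set:
  assumes "numerical_semigroup S"
  shows "finite (apery_set S a)"
proof -
  obtain B where B: "\<And>z. z \<notin> S \<Longrightarrow> z < B"
    using assms finite_nat_bounded[of "UNIV - S"] by (auto simp: numerical_semigroup_def)
  have "apery_set S a \<subseteq> {..<B + a}"
    using B by (force simp: apery_set_def)
  then show ?thesis
    by (rule finite_subset) simp
qed

lemma apery_set_decomposition:
  assumes "numerical_semigroup S" "a > 0" "a \<in> S" "s \<in> S"
  shows "\<exists>w k. w \<in> apery_set S a \<and> s = w + k * a"
  using \<open>s \<in> S\<close>
proof (induction s rule: less_induct)
  case (less s)
  show ?case
  proof (cases "s \<in> apery_set S a")
    case True
    then show ?thesis by (metis add_0_right mult_0)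
  next
    case False
    with less.prems have "a \<le> s" "s - a \<in> S"
      by (auto simp: apery_set_def)
    moreover have "s - a < s"
      using \<open>a > 0\<close> \<open>a \<le> s\<close> by simp
    ultimately obtain w k where "w \<in> apery_set S a" "s - a = w + k * a"
      using less.IH by blast
    then have "s = w + Suc k * a"
      using \<open>a \<le> s\<close> by simp
    with \<open>w \<in> apery_set S a\<close> show ?thesis by blast
  qed
qed

lemma apery_set_cong_imp_eq:
  assumes S: "numerical_semigroup S" "a \<in> S"
    and "w \<in> apery_set S a" "w' \<in> apery_set S a" "[w = w'] (mod a)"
  shows "w = w'"
proof -
  have "w' = w" if w: "w \<in> apery_set S a" "w' \<in> apery_set S a" "[w' = w] (mod a)" "w \<le> w'"
    for w w'
  proof (rule ccontr)
    assume "w' \<noteq> w"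
    obtain q where q: "w' = q * a + w"
      using w cong_le_nat by blast
    with \<open>w' \<noteq> w\<close> obtain k where "q = Suc k"
      using not0_implies_Suc by fastforce
    with q have "a \<le> w'" "w' - a = w + k * a"
      by simp_all
    moreover have "w + k * a \<in> S"
      using w(1) apery_set_subset numerical_semigroup_mult_closed[OF S]
        numerical_semigroup_add_closed[OF S(1)] by blast
    ultimately show False
      using w(2) by (simp add: apery_set_def)
  qed
  then show ?thesis
    using assms(3-5) cong_sym by (cases "w \<le> w'") force+
qed

lemma lin_comb_set_apery_representation:
  assumes "numerical_semigroup S2" "a1 > 0" "a1 \<in> S2"
    and "numerical_semigroup S1" "a2 \<in> S1"
    and "n \<in> lin_comb_set a1 S1 a2 S2"
  shows "\<exists>w \<in> apery_set S2 a1. \<exists>u \<in> S1. n = a1 * u + a2 * w"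
proof -
  obtain u y where "u \<in> S1" "y \<in> S2" and n: "n = a1 * u + a2 * y"
    using assms(6) by (auto simp: lin_comb_set_def)
  obtain w k where w: "w \<in> apery_set S2 a1" and y: "y = w + k * a1"
    using apery_set_decomposition assms(1-3) \<open>y \<in> S2\<close> by blast
  have "u + k * a2 \<in> S1"
    using assms(4,5) \<open>u \<in> S1\<close> numerical_semigroup_mult_closed
      numerical_semigroup_add_closed by blast
  moreover have "n = a1 * (u + k * a2) + a2 * w"
    unfolding n y by (simp add: algebra_simps)
  ultimately show ?thesis
    using w by blast
qed

lemma lin_comb_set_apery_representation_unique:
  assumes "numerical_semigroup S2" "a1 \<in> S2" "coprime a1 a2"
    and "w \<in> apery_set S2 a1" "w' \<in> apery_set S2 a1"
    and "a1 * u + a2 * w = a1 * u' + a2 * w'"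
  shows "w = w'"
proof -
  have "[a2 * w = a2 * w'] (mod a1)"
    using arg_cong[OF assms(6), of "\<lambda>x. x mod a1"] by (simp add: cong_def)
  then have "[w = w'] (mod a1)"
    using assms(3) by (simp add: cong_mult_lcancel_nat coprime_commute)
  then show ?thesis
    using apery_set_cong_imp_eq assms(1,2,4,5) by blast
qed

lemma card_apery_representations:
  assumes "numerical_semigroup S1" "numerical_semigroup S2"
    and "a1 > 0" "coprime a1 a2" "a2 \<in> S1" "a1 \<in> S2"
  shows "card {w \<in> apery_set S2 a1. \<exists>u\<in>S1. n = a1 * u + a2 * w} =
    of_bool (n \<in> lin_comb_set a1 S1 a2 S2)"
proof (cases "n \<in> lin_comb_set a1 S1 a2 S2")
  case True
  then obtain w u where w: "w \<in> apery_set S2 a1" "u \<in> S1" "n = a1 * u + a2 * w"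
    using lin_comb_set_apery_representation assms by blast
  have "{w \<in> apery_set S2 a1. \<exists>u\<in>S1. n = a1 * u + a2 * w} = {w}"
    using w lin_comb_set_apery_representation_unique[OF assms(2,6,4)] by blast
  with True show ?thesis by simp
next
  case False
  then have none: "{w \<in> apery_set S2 a1. \<exists>u\<in>S1. n = a1 * u + a2 * w} = {}"
    using apery_set_subset by (fastforce simp: lin_comb_set_def)
  show ?thesis
    unfolding none using False by simp
qed

lemma hilbert_series_nth: "fps_nth (hilbert_series S) n = of_bool (n \<in> S)"
  by (simp add: hilbert_series_def)

lemma hilbert_series_compose_X_power_nth:
  assumes "w > 0"
  shows "fps_nth (hilbert_series S oo fps_X ^ w) n = of_bool (\<exists>u\<in>S. n = w * u)"
proof -
  have "fps_nth (hilbert_series S oo fps_X ^ w) n =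
      (\<Sum>i\<in>{0..n}. if i = n div w then of_bool (\<exists>u\<in>S. n = w * u) else 0)"
    unfolding fps_compose_nth
    using assms by (intro sum.cong) (auto simp: hilbert_series_nth power_mult[symmetric])
  also have "\<dots> = of_bool (\<exists>u\<in>S. n = w * u)"
    by (simp add: div_le_dividend)
  finally show ?thesis .
qed

lemma fps_X_power_mult_hilbert_series_compose_nth:
  assumes "w > 0"
  shows "fps_nth (fps_X ^ c * (hilbert_series S oo fps_X ^ w)) n = of_bool (\<exists>u\<in>S. n = w * u + c)"
proof (cases "n < c")
  case False
  then have "(\<exists>u\<in>S. n - c = w * u) \<longleftrightarrow> (\<exists>u\<in>S. n = w * u + c)"
    by (metis add_diff_cancel_right' le_add_diff_inverse2 not_less)
  with False assms show ?thesis
    by (simp add: fps_X_power_mult_nth hilbert_series_compose_X_power_nth)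
qed (simp add: fps_X_power_mult_nth)

lemma hilbert_series_lin_comb_set:
  assumes "numerical_semigroup S1" "numerical_semigroup S2"
    and "a1 > 0" "coprime a1 a2" "a2 \<in> S1" "a1 \<in> S2"
  shows "(hilbert_series S1 oo fps_X ^ a1) * fps_of_poly (\<Sum>w\<in>apery_set S2 a1. monom 1 (a2 * w)) =
    hilbert_series (lin_comb_set a1 S1 a2 S2)" (is "?F = ?G")
proof (rule fps_ext)
  fix n
  have "fps_nth ?F n =
      (\<Sum>w\<in>apery_set S2 a1. of_bool (\<exists>u\<in>S1. n = a1 * u + a2 * w))"
    using assms(3)
    by (simp add: fps_of_poly_sum fps_of_poly_monom' sum_distrib_left fps_sum_nth mult.commute
        fps_X_power_mult_hilbert_series_compose_nth)
  also have "\<dots> = of_nat (card {w \<in> apery_set S2 a1. \<exists>u\<in>S1. n = a1 * u + a2 * w})"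
    using finite_apery_set[OF assms(2)] by (simp add: Int_def)
  also have "\<dots> = fps_nth ?G n"
    using card_apery_representations[OF assms] by (simp add: hilbert_series_nth)
  finally show "fps_nth ?F n = fps_nth ?G n" .
qed

lemma hilbert_series_lin_comb_set_factor:
  assumes "numerical_semigroup S1" "numerical_semigroup S2"
    and "a1 > 0" "coprime a1 a2" "a2 \<in> S1" "a1 \<in> S2"
  shows "\<exists>(f::int poly) (w::nat). w \<ge> 1 \<and> (\<forall>i. coeff f i \<ge> 0) \<and>
    (hilbert_series S1 oo fps_X ^ w) * fps_of_poly f = hilbert_series (lin_comb_set a1 S1 a2 S2)"
proof (intro exI conjI)
  show "(hilbert_series S1 oo fps_X ^ a1) * fps_of_poly (\<Sum>w\<in>apery_set S2 a1. monom 1 (a2 * w)) =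
    hilbert_series (lin_comb_set a1 S1 a2 S2)"
    by (rule hilbert_series_lin_comb_set[OF assms])
qed (use assms(3) in \<open>auto simp: coeff_sum sum_nonneg\<close>)

theorem theorem6:
  fixes S1 S2 :: "nat set" and a1 a2 :: nat
  assumes "numerical_semigroup S1" and "numerical_semigroup S2"
    and "a1 > 0" and "a2 > 0" and "coprime a1 a2"
    and "a2 \<in> S1" and "a1 \<in> S2"
  defines "S \<equiv> lin_comb_set a1 S1 a2 S2"
  shows "poly_related S1 S \<and> poly_related S2 S \<and>
    (\<exists>(f::int poly) (w::nat). w \<ge> 1 \<and> (\<forall>i. coeff f i \<ge> 0) \<and>
       (hilbert_series S1 oo fps_X ^ w) * fps_of_poly f = hilbert_series S) \<and>
    (\<exists>(f::int poly) (w::nat). w \<ge> 1 \<and> (\<forall>i. coeff f i \<ge> 0) \<and>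
       (hilbert_series S2 oo fps_X ^ w) * fps_of_poly f = hilbert_series S)"
proof -
  have "S = lin_comb_set a2 S2 a1 S1"
    unfolding S_def lin_comb_set_def by (auto simp: add.commute)
  then have "\<exists>(f::int poly) w. w \<ge> 1 \<and> (\<forall>i. coeff f i \<ge> 0) \<and>
      (hilbert_series S2 oo fps_X ^ w) * fps_of_poly f = hilbert_series S"
    using hilbert_series_lin_comb_set_factor assms by (simp add: coprime_commute)
  moreover have "\<exists>(f::int poly) w. w \<ge> 1 \<and> (\<forall>i. coeff f i \<ge> 0) \<and>
      (hilbert_series S1 oo fps_X ^ w) * fps_of_poly f = hilbert_series S"
    unfolding S_def using hilbert_series_lin_comb_set_factor assms by simp
  ultimately show ?thesis
    unfolding poly_related_def by blast
qed

end
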